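(* For integers $a\ge1$ and $d\ge-1$, \[ \operatorname*{Res}_{z=2}\frac{f_a(z)}{z^2(z-2)^d}\,\mathrm{d}z=\big(-\tfrac12\big)^{a+d+1}, \] where $f_a(z)=\big(-\frac{z(z-1)}{z-2}\frac{\mathrm{d}}{\mathrm{d}z}\big)^a\frac{2-2z}{z-2}$.
   Context: Equivalently, with $x=\frac{z-1}{z^2}$, $f_a(z)=\sum_{\mu\ge1}\binom{2\mu}{\mu}\mu^ax^\mu$; each $f_a$ is a rational function of $z$. *)

theory Defs
  imports "HOL-Complex_Analysis.Complex_Analysis"
begin

definition thetaOp :: "(complex \<Rightarrow> complex) \<Rightarrow> complex \<Rightarrow> complex" where
  "thetaOp g = (\<lambda>z. - (z * (z - 1) / (z - 2)) * deriv g z)"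

definition f_fun :: "nat \<Rightarrow> complex \<Rightarrow> complex" where
  "f_fun a = (thetaOp ^^ a) (\<lambda>z. (2 - 2 * z) / (z - 2))"

end

theory Submission
  imports Defs
begin

(*
  Work with the contour integrals M_g(d) of g(z) / (z^2 (z - 2)^d) over the circle |z - 2| = 1,
  which are 2 pi i times the residues in question. Integration by parts moves the operator
  theta g = -z(z - 1)/(z - 2) g' onto the weight, and since z(z - 1) = (z - 2)^2 + 3(z - 2) + 2,
    M_(theta g)(d) = M_g(d + 1) - (d + 1) (M_g(d) + 3 M_g(d + 1) + 2 M_g(d + 2)).
  If M_g(e - 1) = C x^e with x = -1/2, the bracket at d = e - 1 is C x^e (1 + 3x + 2x^2) = 0,
  so theta maps geometric moment sequences to geometric ones with one more factor x.
  It remains to treat a = 1. As f_0 = -2 - 2/(z - 2), the moments of f_0 are those of the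
  constant 1, which obey the same recurrence (theta kills constants) and are therefore
  determined by their values 0 at d = 0 and pi i / 2 at d = 1 (Cauchy's integral formula).
*)

lemma contour_integral_by_parts_closed_path:
  assumes S: "open S" and \<gamma>: "valid_path \<gamma>" "pathfinish \<gamma> = pathstart \<gamma>" "path_image \<gamma> \<subseteq> S"
    and g: "g holomorphic_on S"
    and h: "\<And>z. z \<in> S \<Longrightarrow> (h has_field_derivative h' z) (at z)"
    and h': "h' holomorphic_on S"
  shows "contour_integral \<gamma> (\<lambda>z. h z * deriv g z) = - contour_integral \<gamma> (\<lambda>z. h' z * g z)"
proof -
  have "h holomorphic_on S"
    using h S by (subst holomorphic_on_open) blast+
  then have integrable: "(\<lambda>z. h' z * g z) contour_integrable_on \<gamma>"
                        "(\<lambda>z. h z * deriv g z) contour_integrable_on \<gamma>"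
    by (intro contour_integrable_holomorphic_simple[OF _ S \<gamma>(1,3)] holomorphic_intros g h' S)+
  have "((\<lambda>z. h' z * g z + h z * deriv g z) has_contour_integral 0) \<gamma>"
  proof (rule Cauchy_theorem_primitive[of S "\<lambda>z. h z * g z"])
    fix z assume "z \<in> S"
    with h g S
    show "((\<lambda>z. h z * g z) has_field_derivative h' z * g z + h z * deriv g z) (at z within S)"
      by (auto intro!: derivative_eq_intros holomorphic_derivI simp: has_field_derivative_at_within)
  qed (use \<gamma> in auto)
  then have "contour_integral \<gamma> (\<lambda>z. h' z * g z + h z * deriv g z) = 0"
    by (rule contour_integral_unique)
  then show ?thesis
    unfolding contour_integral_add[OF integrable] by (simp add: eq_neg_iff_add_eq_0 add.commute)
qed

lemma path_image_circlepath_2_1: "path_image (circlepath 2 1) \<subseteq> - {0, 2 :: complex}"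
  by (auto simp: dist_norm)

definition moment :: "(complex \<Rightarrow> complex) \<Rightarrow> int \<Rightarrow> complex" where
  "moment g d = contour_integral (circlepath 2 1) (\<lambda>z. g z / (z\<^sup>2 * (z - 2) powi d))"

lemma has_contour_integral_moment:
  assumes "g holomorphic_on - {0, 2}"
  shows "((\<lambda>z. g z / (z\<^sup>2 * (z - 2) powi d)) has_contour_integral moment g d) (circlepath 2 1)"
  unfolding moment_def
  by (intro has_contour_integral_integral contour_integrable_holomorphic_simple
      [OF _ _ valid_path_circlepath path_image_circlepath_2_1] holomorphic_intros assms)
     (auto intro: finite_imp_closed)

lemma moment_thetaOp:
  assumes g: "g holomorphic_on - {0, 2}"
  shows "moment (thetaOp g) d
           = moment g (d + 1)
             - of_int (d + 1) * (moment g d + 3 * moment g (d + 1) + 2 * moment g (d + 2))"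
proof -
  define h where "h z = (z - 1) / z * (z - 2) powi (- (d + 1))" for z :: complex
  define h' where "h' z = 1 / (z\<^sup>2 * (z - 2) powi (d + 1)) - of_int (d + 1) *
      (1 / (z\<^sup>2 * (z - 2) powi d) + 3 / (z\<^sup>2 * (z - 2) powi (d + 1))
       + 2 / (z\<^sup>2 * (z - 2) powi (d + 2)))"
    for z :: complex
  have h_deriv: "(h has_field_derivative h' z) (at z)" if "z \<in> - {0, 2}" for z
  proof -
    have z: "z \<noteq> 0" "z - 2 \<noteq> 0" using that by auto
    have "1 / z\<^sup>2 * (z - 2) powi (- (d + 1))
            - (z - 1) / z * (of_int (d + 1) * (z - 2) powi (- (d + 1) - 1)) = h' z"
    proof -
      define w where "w = z - 2"
      define p where "p = w powi d"
      have w: "w \<noteq> 0" and p: "p \<noteq> 0" using z by (simp_all add: w_def p_def)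
      have powers: "w powi (d + 1) = p * w" "w powi (d + 2) = p * w\<^sup>2"
        "w powi (- (d + 1)) = inverse (p * w)" "w powi (- (d + 1) - 1) = inverse (p * w\<^sup>2)"
        using w by (simp_all add: p_def power_int_add power_int_diff power_int_minus
                     divide_inverse mult.commute)
      have "(z - 1) / z = (w\<^sup>2 + 3 * w + 2) / z\<^sup>2"
        using z by (simp add: w_def field_simps power2_eq_square)
      moreover have "1 / (z\<^sup>2 * p) + 3 / (z\<^sup>2 * (p * w)) + 2 / (z\<^sup>2 * (p * w\<^sup>2)) =
          (w\<^sup>2 + 3 * w + 2) / z\<^sup>2 * inverse (p * w\<^sup>2)"
        using z w p by (simp add: field_simps power2_eq_square)
      ultimately show ?thesis
        unfolding h'_def w_def[symmetric] p_def[symmetric] powers by (simp add: divide_inverse)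
    qed
    then show ?thesis
      unfolding h_def using z by (auto intro!: derivative_eq_intros simp: field_simps power2_eq_square)
  qed
  have "moment (thetaOp g) d = contour_integral (circlepath 2 1) (\<lambda>z. - (h z * deriv g z))"
    unfolding moment_def thetaOp_def
  proof (rule contour_integral_cong)
    fix z assume "z \<in> path_image (circlepath 2 1)"
    then have z: "z \<noteq> 0" "z - 2 \<noteq> 0" using path_image_circlepath_2_1 by auto
    moreover have "(z - 2) powi (- (d + 1)) = inverse ((z - 2) powi d * (z - 2))"
      using z by (simp add: power_int_minus power_int_add flip: minus_add_distrib)
    ultimately
    show "- (z * (z - 1) / (z - 2)) * deriv g z / (z\<^sup>2 * (z - 2) powi d) = - (h z * deriv g z)"
      by (simp add: h_def field_simps power2_eq_square)
  qed simp
  also have "\<dots> = contour_integral (circlepath 2 1) (\<lambda>z. h' z * g z)"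
  proof -
    have "h' holomorphic_on - {0, 2}"
      unfolding h'_def by (intro holomorphic_intros) auto
    then show ?thesis
      using contour_integral_by_parts_closed_path[OF _ valid_path_circlepath _
          path_image_circlepath_2_1 g h_deriv]
      by (simp add: contour_integral_neg open_Compl)
  qed
  also have "\<dots> = moment g (d + 1)
                   - of_int (d + 1) * (moment g d + 3 * moment g (d + 1) + 2 * moment g (d + 2))"
  proof (rule contour_integral_unique, rule has_contour_integral_eq)
    show "((\<lambda>z. g z / (z\<^sup>2 * (z - 2) powi (d + 1)) - of_int (d + 1) *
             (g z / (z\<^sup>2 * (z - 2) powi d) + 3 * (g z / (z\<^sup>2 * (z - 2) powi (d + 1)))
              + 2 * (g z / (z\<^sup>2 * (z - 2) powi (d + 2)))))
          has_contour_integral moment g (d + 1) - of_int (d + 1) *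
            (moment g d + 3 * moment g (d + 1) + 2 * moment g (d + 2))) (circlepath 2 1)"
      by (intro has_contour_integral_diff has_contour_integral_lmul has_contour_integral_add
          has_contour_integral_moment g)
  qed (simp add: h'_def algebra_simps)
  finally show ?thesis .
qed

lemma moment_thetaOp_geometric:
  assumes g: "g holomorphic_on - {0, 2}"
    and moments: "\<And>e. moment g (int e - 1) = C * (- 1 / 2) ^ e"
  shows "moment (thetaOp g) (int e - 1) = C * (- 1 / 2) ^ Suc e"
proof -
  have "moment (thetaOp g) (int e - 1)
      = moment g (int (Suc e) - 1) - of_nat e *
        (moment g (int e - 1) + 3 * moment g (int (Suc e) - 1) + 2 * moment g (int (Suc (Suc e)) - 1))"
    using moment_thetaOp[OF g, of "int e - 1"] by (simp add: algebra_simps)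
  also have "\<dots> = C * (- 1 / 2) ^ Suc e
                   - of_nat e * C * (- 1 / 2) ^ e * (1 + 3 * (- 1 / 2) + 2 * (- 1 / 2)\<^sup>2)"
    unfolding moments by (simp add: algebra_simps power2_eq_square)
  also have "1 + 3 * (- 1 / 2) + 2 * (- 1 / 2)\<^sup>2 = (0 :: complex)"
    by (simp add: power2_eq_square)
  finally show ?thesis by simp
qed

lemma moment_eq_residue:
  assumes "g holomorphic_on - {2}"
  shows "moment g d = 2 * of_real pi * \<i> * residue (\<lambda>z. g z / (z\<^sup>2 * (z - 2) powi d)) 2"
proof -
  have holo: "(\<lambda>z. g z / (z\<^sup>2 * (z - 2) powi d)) holomorphic_on ball 2 (3 / 2) - {2}"
    by (intro holomorphic_intros holomorphic_on_subset[OF assms]) (auto simp: dist_norm)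
  have "((\<lambda>z. g z / (z\<^sup>2 * (z - 2) powi d)) has_contour_integral
          2 * of_real pi * \<i> * residue (\<lambda>z. g z / (z\<^sup>2 * (z - 2) powi d)) 2) (circlepath 2 1)"
    using base_residue[OF open_ball _ _ holo, of 1] by (simp add: cball_subset_ball_iff)
  then show ?thesis
    unfolding moment_def by (rule contour_integral_unique)
qed

lemma moment_one_rec:
  "moment (\<lambda>_. 1) (d + 1)
     = of_int (d + 1) *
       (moment (\<lambda>_. 1) d + 3 * moment (\<lambda>_. 1) (d + 1) + 2 * moment (\<lambda>_. 1) (d + 2))"
proof -
  have "thetaOp (\<lambda>_. 1) = (\<lambda>_. 0)"
    by (simp add: thetaOp_def)
  then have "moment (thetaOp (\<lambda>_. 1)) d = 0"
    by (simp add: moment_def)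
  then show ?thesis
    using moment_thetaOp[of "\<lambda>_. 1" d] by simp
qed

lemma moment_one_1: "moment (\<lambda>_. 1) 1 = 2 * of_real pi * \<i> / 4"
proof -
  have "((\<lambda>z. 1 / z\<^sup>2 / (z - 2)) has_contour_integral 2 * of_real pi * \<i> * (1 / 2\<^sup>2))
          (circlepath 2 1)"
    by (rule Cauchy_integral_circlepath_simple) (auto intro!: holomorphic_intros simp: dist_norm)
  then show ?thesis
    unfolding moment_def by (intro contour_integral_unique) simp
qed

lemma moment_one:
  "moment (\<lambda>_. 1) (int n) = 2 * of_real pi * \<i> * (- of_nat n / 2 * (- 1 / 2) ^ n)"
proof -
  let ?M = "\<lambda>n. moment (\<lambda>_. 1) (int n)"
  let ?c = "\<lambda>n. 2 * of_real pi * \<i> * (- of_nat n / 2 * (- 1 / 2) ^ n) :: complex"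
  have "?M n = ?c n \<and> ?M (Suc n) = ?c (Suc n)"
  proof (induction n)
    case 0
    then show ?case using moment_one_rec[of "-1"] moment_one_1 by simp
  next
    case (Suc n)
    have "?M (Suc n) = of_nat (Suc n) * (?M n + 3 * ?M (Suc n) + 2 * ?M (Suc (Suc n)))"
      using moment_one_rec[of "int n"] by (simp add: add.commute)
    then have step: "?M (Suc (Suc n)) = (?M (Suc n) / of_nat (Suc n) - ?M n - 3 * ?M (Suc n)) / 2"
      by (simp add: field_simps del: of_nat_Suc)
    from Suc.IH have IH: "?M n = ?c n" "?M (Suc n) = ?c (Suc n)" by simp_all
    show ?case
      unfolding step IH by (simp add: field_simps del: of_nat_Suc) (simp add: algebra_simps)
  qed
  then show ?thesis ..
qed

lemma holomorphic_on_thetaOp: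
  assumes "g holomorphic_on S" "open S" "2 \<notin> S"
  shows "thetaOp g holomorphic_on S"
  unfolding thetaOp_def using assms(3) by (intro holomorphic_intros assms(1,2)) auto

lemma f_fun_0: "f_fun 0 = (\<lambda>z. (2 - 2 * z) / (z - 2))"
  by (simp add: f_fun_def)

lemma f_fun_Suc: "f_fun (Suc a) = thetaOp (f_fun a)"
  by (simp add: f_fun_def)

lemma holomorphic_f_fun: "f_fun a holomorphic_on - {2}"
proof (induction a)
  case 0
  show ?case unfolding f_fun_0 by (intro holomorphic_intros) auto
next
  case (Suc a)
  then show ?case
    unfolding f_fun_Suc by (rule holomorphic_on_thetaOp) auto
qed

lemma moment_f_fun_0:
  "moment (f_fun 0) (int n) = 2 * of_real pi * \<i> * ((of_nat n - 1) / 2 * (- 1 / 2) ^ n)"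
proof -
  have combination:
    "((\<lambda>z. - 2 * (1 / (z\<^sup>2 * (z - 2) powi int n)) - 2 * (1 / (z\<^sup>2 * (z - 2) powi int (Suc n))))
      has_contour_integral - 2 * moment (\<lambda>_. 1) (int n) - 2 * moment (\<lambda>_. 1) (int (Suc n)))
     (circlepath 2 1)"
    by (intro has_contour_integral_diff has_contour_integral_lmul has_contour_integral_moment
        holomorphic_on_const)
  have reduction:
    "moment (f_fun 0) (int n) = - 2 * moment (\<lambda>_. 1) (int n) - 2 * moment (\<lambda>_. 1) (int (Suc n))"
    unfolding moment_def[of "f_fun 0"]
  proof (rule contour_integral_unique, rule has_contour_integral_eq[OF combination])
    fix z assume "z \<in> path_image (circlepath 2 1)"
    then have "z \<noteq> 0" "z - 2 \<noteq> 0" using path_image_circlepath_2_1 by auto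
    then show "- 2 * (1 / (z\<^sup>2 * (z - 2) powi int n)) - 2 * (1 / (z\<^sup>2 * (z - 2) powi int (Suc n)))
               = f_fun 0 z / (z\<^sup>2 * (z - 2) powi int n)"
      by (simp add: f_fun_0 power_int_add field_simps)
  qed
  show ?thesis
    unfolding reduction moment_one by (simp add: field_simps)
qed

lemma moment_f_fun_1: "moment (f_fun 1) (int e - 1) = 2 * of_real pi * \<i> * (- 1 / 2) ^ Suc e"
proof -
  have "f_fun 0 holomorphic_on - {0, 2}"
    by (rule holomorphic_on_subset[OF holomorphic_f_fun]) auto
  from moment_thetaOp[OF this]
  have rec: "moment (f_fun 1) d = moment (f_fun 0) (d + 1) - of_int (d + 1) *
      (moment (f_fun 0) d + 3 * moment (f_fun 0) (d + 1) + 2 * moment (f_fun 0) (d + 2))" for d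
    by (simp add: f_fun_Suc[of 0, symmetric])
  show ?thesis
  proof (cases e)
    case 0
    then show ?thesis using rec[of "- 1"] moment_f_fun_0[of 0] by simp
  next
    case (Suc m)
    have idx: "int m + 1 = int (Suc m)" "int m + 2 = int (Suc (Suc m))" by simp_all
    have "moment (f_fun 1) (int m) = 2 * of_real pi * \<i> * (- 1 / 2) ^ Suc (Suc m)"
      unfolding rec idx moment_f_fun_0 by (simp add: field_simps)
    with Suc show ?thesis by simp
  qed
qed

lemma moment_f_fun:
  assumes "a \<ge> 1"
  shows "moment (f_fun a) (int e - 1) = 2 * of_real pi * \<i> * (- 1 / 2) ^ (a + e)"
  using assms
proof (induction a arbitrary: e rule: dec_induct)
  case base
  then show ?case using moment_f_fun_1 by simp
next
  case (step a)
  have "f_fun a holomorphic_on - {0, 2}"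
    by (rule holomorphic_on_subset[OF holomorphic_f_fun]) auto
  moreover have "moment (f_fun a) (int e - 1) = 2 * of_real pi * \<i> * (- 1 / 2) ^ a * (- 1 / 2) ^ e" for e
    using step.IH by (simp add: power_add)
  ultimately show ?case
    by (simp add: f_fun_Suc moment_thetaOp_geometric power_add)
qed

theorem lemma6p3:
  fixes a :: nat and d :: int
  assumes "a \<ge> 1" and "d \<ge> -1"
  shows "residue (\<lambda>z. f_fun a z / (z\<^sup>2 * (z - 2) powi d)) 2
           = (- 1 / 2 :: complex) powi (int a + d + 1)"
proof -
  define e where "e = nat (d + 1)"
  have d: "d = int e - 1" and exponent: "int a + d + 1 = int (a + e)"
    using assms(2) by (simp_all add: e_def)
  have "2 * of_real pi * \<i> * residue (\<lambda>z. f_fun a z / (z\<^sup>2 * (z - 2) powi d)) 2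
          = moment (f_fun a) d"
    by (rule moment_eq_residue[OF holomorphic_f_fun, symmetric])
  also have "\<dots> = 2 * of_real pi * \<i> * (- 1 / 2) ^ (a + e)"
    unfolding d by (rule moment_f_fun[OF assms(1)])
  finally show ?thesis
    unfolding exponent power_int_of_nat by simp
qed

end
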